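(* Let $q_1(x),q_2(x)\in\mathbb{R}[x]$ be two monic quadratic polynomials neither of which is the square of a linear polynomial, and let $I\subseteq\mathbb{R}$ be the largest (infinite) interval on which both $q_1$ and $q_2$ are non-negative. Let $P_1,P_2,P_3,P_4\in\mathbb{R}[x]$ with $C:=\max\{\deg P_j:1\le j\le4\}\ge0$, and put $$P(x)=P_1(x)+P_2(x)\sqrt{q_1(x)}+P_3(x)\sqrt{q_2(x)}+P_4(x)\sqrt{q_1(x)q_2(x)}.$$ Then the equation $P(x)=0$ has at most $4(C+2)$ roots in $I$, unless $q_1=q_2$ and both $P_2+P_3$ and $P_1+q_1P_4$ are the zero polynomial, in which case $P(x)=0$ for every $x\in I$.
   Context: The zero polynomial is assigned degree $-1$. *)

theory Defs
  imports "HOL-Analysis.Analysis" "HOL-Computational_Algebra.Polynomial"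
begin

definition monic_quadratic :: "real poly \<Rightarrow> bool" where
  "monic_quadratic q \<longleftrightarrow> degree q = 2 \<and> lead_coeff q = 1"

definition square_of_linear :: "real poly \<Rightarrow> bool" where
  "square_of_linear q \<longleftrightarrow> (\<exists>l. degree l = 1 \<and> q = l ^ 2)"

definition largest_infinite_interval :: "real poly \<Rightarrow> real poly \<Rightarrow> real set \<Rightarrow> bool" where
  "largest_infinite_interval q1 q2 I \<longleftrightarrow>
     is_interval I \<and> \<not> bounded I \<and>
     (\<forall>x\<in>I. poly q1 x \<ge> 0 \<and> poly q2 x \<ge> 0) \<and>
     (\<forall>J. is_interval J \<and> I \<subseteq> J \<and> (\<forall>x\<in>J. poly q1 x \<ge> 0 \<and> poly q2 x \<ge> 0) \<longrightarrow> J = I)"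

end

theory Submission imports Defs begin

text \<open>
  A root \<open>x\<close> of \<open>P\<close> in \<open>I\<close> is a root of the norm of \<open>P\<close> down to \<open>\<real>[x]\<close>, obtained by
  eliminating first \<open>\<surd>q\<^sub>1\<close> and then \<open>\<surd>q\<^sub>2\<close>; it is a polynomial of degree at most \<open>4(C + 2)\<close>.
  The norm vanishes identically only in the stated degenerate case: a monic quadratic that
  is not a square has two distinct complex roots, so \<open>q\<^sub>1\<close>, \<open>q\<^sub>2\<close> and (if \<open>q\<^sub>1 \<noteq> q\<^sub>2\<close>) \<open>q\<^sub>1q\<^sub>2\<close>
  have a root of odd multiplicity, while \<open>X\<^sup>2 = q Y\<^sup>2\<close> with \<open>Y \<noteq> 0\<close> would make every
  multiplicity of \<open>q\<close> even. Hence \<open>a\<^sup>2 - q b\<^sup>2 = 0\<close> forces \<open>a = b = 0\<close>.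
\<close>

lemma map_poly_of_real_mult:
  fixes p q :: "real poly"
  shows "map_poly complex_of_real (p * q) = map_poly complex_of_real p * map_poly complex_of_real q"
  by (rule poly_eqI) (simp add: coeff_map_poly coeff_mult)

lemma map_poly_of_real_eq_iff:
  fixes p q :: "real poly"
  shows "map_poly complex_of_real p = map_poly complex_of_real q \<longleftrightarrow> p = q"
  by (auto simp: poly_eq_iff coeff_map_poly)

lemma map_poly_of_real_eq_0_iff: "map_poly complex_of_real p = 0 \<longleftrightarrow> p = 0"
  by (simp add: map_poly_eq_0_iff)


subsection \<open>Odd multiplicities and the equation \<open>X\<^sup>2 = Q Y\<^sup>2\<close>\<close>

lemma order_mult_linear_factors:
  fixes w1 w2 z :: "'a::idom"
  shows "order z ([:-w1, 1:] * [:-w2, 1:]) = (if z = w1 then 1 else 0) + (if z = w2 then 1 else 0)"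
proof -
  have linear: "order z [:-w, 1:] = (if z = w then 1 else 0)" for w :: 'a
    using order_power_n_n[of w 1] by (auto intro: order_0I)
  show ?thesis by (subst order_mult) (simp_all add: linear)
qed

lemma square_eq_mult_square_imp_zero:
  fixes X Y Q :: "'a::idom poly"
  assumes "Q \<noteq> 0" and "odd (order z Q)" and "X\<^sup>2 = Q * Y\<^sup>2"
  shows "X = 0 \<and> Y = 0"
proof (rule ccontr)
  assume "\<not> (X = 0 \<and> Y = 0)"
  with assms(1,3) have "X \<noteq> 0" "Y \<noteq> 0" by auto
  then have "order z (X\<^sup>2) = 2 * order z X" "order z (Q * Y\<^sup>2) = order z Q + 2 * order z Y"
    using assms(1) by (simp_all add: power2_eq_square order_mult)
  with assms(2,3) show False by (metis even_add even_mult_iff even_numeral)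
qed

lemma real_square_eq_mult_square_imp_zero:
  fixes X Y Q :: "real poly"
  assumes "Q \<noteq> 0" and "odd (order z (map_poly complex_of_real Q))" and "X\<^sup>2 = Q * Y\<^sup>2"
  shows "X = 0 \<and> Y = 0"
proof -
  have "(map_poly complex_of_real X)\<^sup>2 = map_poly complex_of_real Q * (map_poly complex_of_real Y)\<^sup>2"
    using arg_cong[OF assms(3), of "map_poly complex_of_real"]
    by (simp add: power2_eq_square map_poly_of_real_mult)
  then show ?thesis
    using square_eq_mult_square_imp_zero assms(1,2) by (metis map_poly_of_real_eq_0_iff)
qed


subsection \<open>Monic quadratics that are not squares\<close>

lemma monic_quadratic_eq:
  assumes "monic_quadratic q"
  shows "q = [:coeff q 0, coeff q 1, 1:]"
  using assms unfolding monic_quadratic_def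
  by (intro poly_eqI) (auto simp: coeff_pCons coeff_eq_0 numeral_2_eq_2 split: nat.splits)

lemma monic_quadratic_distinct_complex_roots:
  assumes "monic_quadratic q" and "\<not> square_of_linear q"
  obtains w1 w2 :: complex
    where "w1 \<noteq> w2" and "map_poly complex_of_real q = [:-w1, 1:] * [:-w2, 1:]"
proof -
  define c0 c1 where "c0 = coeff q 0" and "c1 = coeff q 1"
  have q: "q = [:c0, c1, 1:]" using monic_quadratic_eq[OF assms(1)] by (simp add: c0_def c1_def)
  define D where "D = c1\<^sup>2 - 4 * c0"
  have "D \<noteq> 0"
  proof
    assume "D = 0"
    then have "q = [:c1 / 2, 1:]\<^sup>2" using q by (simp add: D_def power2_eq_square field_simps)
    with assms(2) show False unfolding square_of_linear_def by force
  qed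
  define w where "w = csqrt (complex_of_real D)"
  have "w\<^sup>2 = complex_of_real D" "w \<noteq> 0" using \<open>D \<noteq> 0\<close> by (simp_all add: w_def)
  define w1 w2 where "w1 = (- of_real c1 + w) / 2" and "w2 = (- of_real c1 - w) / 2"
  have "w1 * w2 = of_real c0" "- w1 - w2 = of_real c1"
    using \<open>w\<^sup>2 = _\<close> by (simp_all add: w1_def w2_def D_def field_simps power2_eq_square)
  moreover have "[:-w1, 1:] * [:-w2, 1:] = [:w1 * w2, - w1 - w2, 1:]" by simp
  ultimately have "map_poly complex_of_real q = [:-w1, 1:] * [:-w2, 1:]"
    using q by (simp add: map_poly_pCons)
  moreover have "w1 \<noteq> w2" using \<open>w \<noteq> 0\<close> by (simp add: w1_def w2_def divide_simps)
  ultimately show ?thesis using that by blast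
qed

lemma monic_quadratic_simple_root:
  assumes "monic_quadratic q" and "\<not> square_of_linear q"
  shows "\<exists>z. order z (map_poly complex_of_real q) = 1"
proof -
  obtain w1 w2 where w: "w1 \<noteq> w2" "map_poly complex_of_real q = [:-w1, 1:] * [:-w2, 1:]"
    using monic_quadratic_distinct_complex_roots[OF assms] .
  have "order w1 (map_poly complex_of_real q) = 1"
    unfolding w(2) by (simp only: order_mult_linear_factors) (use w(1) in simp)
  then show ?thesis ..
qed

lemma mult_monic_quadratics_odd_root:
  assumes "monic_quadratic q1" and "\<not> square_of_linear q1"
    and "monic_quadratic q2" and "\<not> square_of_linear q2" and "q1 \<noteq> q2"
  shows "\<exists>z. odd (order z (map_poly complex_of_real (q1 * q2)))"
proof (rule ccontr)
  assume even: "\<not> ?thesis"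
  obtain w1 w2 where w: "w1 \<noteq> w2" "map_poly complex_of_real q1 = [:-w1, 1:] * [:-w2, 1:]"
    using monic_quadratic_distinct_complex_roots[OF assms(1,2)] .
  obtain v1 v2 where v: "v1 \<noteq> v2" "map_poly complex_of_real q2 = [:-v1, 1:] * [:-v2, 1:]"
    using monic_quadratic_distinct_complex_roots[OF assms(3,4)] .
  have "q1 \<noteq> 0" "q2 \<noteq> 0" using assms(1,3) by (auto simp: monic_quadratic_def)
  then have "order z (map_poly complex_of_real (q1 * q2))
      = order z (map_poly complex_of_real q1) + order z (map_poly complex_of_real q2)" for z
    by (simp add: map_poly_of_real_mult order_mult map_poly_of_real_eq_0_iff)
  also have "\<dots> z = (if z = w1 then 1 else 0) + (if z = w2 then 1 else 0)
      + ((if z = v1 then 1 else 0) + (if z = v2 then 1 else 0))" for z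
    by (simp only: w(2) v(2) order_mult_linear_factors)
  finally have "even ((if z = w1 then 1 else 0) + (if z = w2 then 1 else 0)
      + ((if z = v1 then 1 else 0) + (if z = v2 then 1 else (0::nat))))" for z
    using even by metis
  from this[of w1] this[of w2] have "w1 \<in> {v1, v2}" "w2 \<in> {v1, v2}"
    using w(1) by (auto split: if_splits)
  with w(1) have "w1 = v1 \<and> w2 = v2 \<or> w1 = v2 \<and> w2 = v1" by auto
  with w v have "map_poly complex_of_real q1 = map_poly complex_of_real q2"
    by (auto simp: mult.commute)
  with assms(5) show False by (simp add: map_poly_of_real_eq_iff)
qed

lemma square_eq_monic_quadratic_mult_square:
  fixes X Y q :: "real poly"
  assumes "monic_quadratic q" and "\<not> square_of_linear q" and "X\<^sup>2 = q * Y\<^sup>2"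
  shows "X = 0 \<and> Y = 0"
proof -
  obtain z where "order z (map_poly complex_of_real q) = 1"
    using monic_quadratic_simple_root[OF assms(1,2)] by blast
  then have "odd (order z (map_poly complex_of_real q))" by simp
  moreover have "q \<noteq> 0" using assms(1) by (auto simp: monic_quadratic_def)
  ultimately show ?thesis using real_square_eq_mult_square_imp_zero assms(3) by blast
qed

lemma square_eq_mult_monic_quadratics_mult_square:
  fixes X Y q1 q2 :: "real poly"
  assumes "monic_quadratic q1" and "\<not> square_of_linear q1"
    and "monic_quadratic q2" and "\<not> square_of_linear q2" and "q1 \<noteq> q2"
    and "X\<^sup>2 = q1 * q2 * Y\<^sup>2"
  shows "X = 0 \<and> Y = 0"
proof -
  obtain z where "odd (order z (map_poly complex_of_real (q1 * q2)))"
    using mult_monic_quadratics_odd_root[OF assms(1-5)] by blast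
  moreover have "q1 * q2 \<noteq> 0" using assms(1,3) by (auto simp: monic_quadratic_def)
  ultimately show ?thesis using real_square_eq_mult_square_imp_zero assms(6) by blast
qed


definition quadratic_norm :: "real poly \<Rightarrow> real poly \<Rightarrow> real poly \<Rightarrow> real poly" where
  "quadratic_norm q a b = a\<^sup>2 - q * b\<^sup>2"

text \<open>With \<open>s = \<surd>q\<^sub>1\<close>, \<open>t = \<surd>q\<^sub>2\<close>, the norm over \<open>s\<close> of \<open>(P\<^sub>1 + P\<^sub>3 t) + (P\<^sub>2 + P\<^sub>4 t) s\<close> is
  \<open>A + B t\<close> with the two polynomials \<open>A\<close>, \<open>B\<close> below; then take the norm over \<open>t\<close>.\<close>
definition biquadratic_norm ::
    "real poly \<Rightarrow> real poly \<Rightarrow> real poly \<Rightarrow> real poly \<Rightarrow> real poly \<Rightarrow> real poly \<Rightarrow> real poly" where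
  "biquadratic_norm q1 q2 P1 P2 P3 P4 =
     quadratic_norm q2 (P1\<^sup>2 + q2 * P3\<^sup>2 - q1 * (P2\<^sup>2 + q2 * P4\<^sup>2)) (2 * (P1 * P3 - q1 * P2 * P4))"

definition sqrt_combination ::
    "real poly \<Rightarrow> real poly \<Rightarrow> real poly \<Rightarrow> real poly \<Rightarrow> real poly \<Rightarrow> real poly \<Rightarrow> real \<Rightarrow> real" where
  "sqrt_combination q1 q2 P1 P2 P3 P4 x =
     poly P1 x + poly P2 x * sqrt (poly q1 x) + poly P3 x * sqrt (poly q2 x)
     + poly P4 x * sqrt (poly q1 x * poly q2 x)"

lemma add_mult_eq_0_imp_norm_eq_0:
  fixes a b s :: "'a::comm_ring_1"
  assumes "a + b * s = 0"
  shows "a\<^sup>2 - s\<^sup>2 * b\<^sup>2 = 0"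
proof -
  from assms have "a = - (b * s)" by (simp add: eq_neg_iff_add_eq_0)
  then show ?thesis by (simp add: power_mult_distrib algebra_simps)
qed

lemma poly_quadratic_norm_eq_0:
  assumes "s\<^sup>2 = poly q x" and "poly a x + poly b x * s = 0"
  shows "poly (quadratic_norm q a b) x = 0"
  using add_mult_eq_0_imp_norm_eq_0[OF assms(2)] assms(1) by (simp add: quadratic_norm_def)

lemma poly_biquadratic_norm_eq_0:
  assumes s: "s\<^sup>2 = poly q1 x" and t: "t\<^sup>2 = poly q2 x"
    and "poly P1 x + poly P2 x * s + poly P3 x * t + poly P4 x * (s * t) = 0"
  shows "poly (biquadratic_norm q1 q2 P1 P2 P3 P4) x = 0"
proof -
  have "(poly P1 x + poly P3 x * t) + (poly P2 x + poly P4 x * t) * s = 0"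
    using assms(3) by (simp add: algebra_simps)
  from add_mult_eq_0_imp_norm_eq_0[OF this]
  have "(poly P1 x + poly P3 x * t)\<^sup>2 - poly q1 x * (poly P2 x + poly P4 x * t)\<^sup>2 = 0"
    by (simp add: s)
  moreover have "poly q2 x = t * t" using t by (simp add: power2_eq_square)
  ultimately have "poly (P1\<^sup>2 + q2 * P3\<^sup>2 - q1 * (P2\<^sup>2 + q2 * P4\<^sup>2)) x
      + poly (2 * (P1 * P3 - q1 * P2 * P4)) x * t = 0"
    by (simp add: power2_eq_square algebra_simps)
  from poly_quadratic_norm_eq_0[OF t this] show ?thesis by (simp add: biquadratic_norm_def)
qed

lemma sqrt_combination_same_radicand:
  assumes "poly q x \<ge> 0"
  shows "sqrt_combination q q P1 P2 P3 P4 x = poly (P1 + q * P4) x + poly (P2 + P3) x * sqrt (poly q x)"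
  using assms by (simp add: sqrt_combination_def algebra_simps)

lemma sqrt_combination_eq_0_imp_biquadratic_norm:
  assumes "poly q1 x \<ge> 0" and "poly q2 x \<ge> 0" and "sqrt_combination q1 q2 P1 P2 P3 P4 x = 0"
  shows "poly (biquadratic_norm q1 q2 P1 P2 P3 P4) x = 0"
  using assms by (intro poly_biquadratic_norm_eq_0[of "sqrt (poly q1 x)" _ _ "sqrt (poly q2 x)"])
    (simp_all add: sqrt_combination_def real_sqrt_mult)

lemma degree_quadratic_norm_le:
  assumes "degree q \<le> 2" and "degree a \<le> n + 2" and "degree b \<le> n"
  shows "degree (quadratic_norm q a b) \<le> 2 * (n + 2)"
proof -
  have "degree (a\<^sup>2) \<le> 2 * (n + 2)"
    using assms(2) degree_power_le[of a 2] by simp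
  moreover have "degree (q * b\<^sup>2) \<le> 2 * (n + 2)"
    using assms(1,3) degree_mult_le[of q "b\<^sup>2"] degree_power_le[of b 2] by simp
  ultimately show ?thesis unfolding quadratic_norm_def by (rule degree_diff_le)
qed

lemma degree_biquadratic_norm_le:
  assumes "degree q1 \<le> 2" and "degree q2 \<le> 2"
    and "degree P1 \<le> n" "degree P2 \<le> n" "degree P3 \<le> n" "degree P4 \<le> n"
  shows "degree (biquadratic_norm q1 q2 P1 P2 P3 P4) \<le> 4 * (n + 2)"
proof -
  have sq: "degree (p\<^sup>2) \<le> 2 * n" if "degree p \<le> n" for p :: "real poly"
    using that degree_power_le[of p 2] by simp
  have mult_q: "degree (q * p) \<le> m + 2" if "degree q \<le> 2" "degree p \<le> m" for q p :: "real poly" and m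
    using that degree_mult_le[of q p] by simp
  have P3: "degree (q2 * P3\<^sup>2) \<le> 2 * n + 2" and P4: "degree (q2 * P4\<^sup>2) \<le> 2 * n + 2"
    using mult_q[OF assms(2) sq[OF assms(5)]] mult_q[OF assms(2) sq[OF assms(6)]] by simp_all
  have "degree (P2\<^sup>2 + q2 * P4\<^sup>2) \<le> 2 * n + 2"
    using sq[OF assms(4)] P4 by (intro degree_add_le) auto
  then have "degree (q1 * (P2\<^sup>2 + q2 * P4\<^sup>2)) \<le> (2 * n + 2) + 2" by (rule mult_q[OF assms(1)])
  then have "degree (P1\<^sup>2 + q2 * P3\<^sup>2 - q1 * (P2\<^sup>2 + q2 * P4\<^sup>2)) \<le> (2 * n + 2) + 2"
    using sq[OF assms(3)] P3 by (intro degree_diff_le degree_add_le) auto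
  moreover have "degree (P1 * P3 - q1 * P2 * P4) \<le> 2 * n + 2"
    using assms degree_mult_le[of P1 P3] degree_mult_le[of "q1 * P2" P4] degree_mult_le[of q1 P2]
    by (intro degree_diff_le) auto
  then have "degree (2 * (P1 * P3 - q1 * P2 * P4)) \<le> 2 * n + 2"
    using degree_mult_le[of 2 "P1 * P3 - q1 * P2 * P4"] by simp
  ultimately have "degree (biquadratic_norm q1 q2 P1 P2 P3 P4) \<le> 2 * ((2 * n + 2) + 2)"
    unfolding biquadratic_norm_def by (rule degree_quadratic_norm_le[OF assms(2)])
  then show ?thesis by simp
qed

lemma quadratic_norm_eq_0_iff:
  assumes "monic_quadratic q" and "\<not> square_of_linear q"
  shows "quadratic_norm q a b = 0 \<longleftrightarrow> a = 0 \<and> b = 0"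
  using square_eq_monic_quadratic_mult_square[OF assms, of a b] by (auto simp: quadratic_norm_def)

text \<open>The vanishing of the inner norm \<open>A + B t\<close> says \<open>(P\<^sub>1 + P\<^sub>3 t)\<^sup>2 = q\<^sub>1 (P\<^sub>2 + P\<^sub>4 t)\<^sup>2\<close>;
  conjugating \<open>t\<close> and comparing, either the \<open>\<surd>q\<^sub>1\<close>-parts or the \<open>\<surd>(q\<^sub>1q\<^sub>2)\<close>-parts match.\<close>
lemma inner_norm_eq_0_cases:
  fixes q1 q2 P1 P2 P3 P4 :: "real poly"
  assumes "q2 \<noteq> 0"
    and A: "P1\<^sup>2 + q2 * P3\<^sup>2 = q1 * (P2\<^sup>2 + q2 * P4\<^sup>2)" and B: "P1 * P3 = q1 * P2 * P4"
  shows "P1\<^sup>2 = q1 * P2\<^sup>2 \<and> P3\<^sup>2 = q1 * P4\<^sup>2 \<or> P1\<^sup>2 = q1 * q2 * P4\<^sup>2 \<and> (q2 * P3)\<^sup>2 = q1 * q2 * P2\<^sup>2"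
proof -
  have "(P1\<^sup>2 - q2 * P3\<^sup>2)\<^sup>2 = (q1 * (P2\<^sup>2 - q2 * P4\<^sup>2))\<^sup>2" using A B by algebra
  then consider "P1\<^sup>2 - q2 * P3\<^sup>2 = q1 * (P2\<^sup>2 - q2 * P4\<^sup>2)"
    | "P1\<^sup>2 - q2 * P3\<^sup>2 = - (q1 * (P2\<^sup>2 - q2 * P4\<^sup>2))"
    by (auto simp: power2_eq_iff)
  then show ?thesis
  proof cases
    case 1
    have "2 * (P1\<^sup>2 - q1 * P2\<^sup>2) = 0" "(2 * q2) * (P3\<^sup>2 - q1 * P4\<^sup>2) = 0"
      using A 1 by algebra+
    with \<open>q2 \<noteq> 0\<close> show ?thesis by simp
  next
    case 2
    have "2 * (P1\<^sup>2 - q1 * q2 * P4\<^sup>2) = 0" "(2 * q2) * (q2 * P3\<^sup>2 - q1 * P2\<^sup>2) = 0"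
      using A 2 by algebra+
    with \<open>q2 \<noteq> 0\<close> show ?thesis by (simp add: power2_eq_square algebra_simps)
  qed
qed

lemma biquadratic_norm_eq_0_imp_zero:
  assumes "monic_quadratic q1" and "\<not> square_of_linear q1"
    and "monic_quadratic q2" and "\<not> square_of_linear q2" and "q1 \<noteq> q2"
    and "biquadratic_norm q1 q2 P1 P2 P3 P4 = 0"
  shows "P1 = 0 \<and> P2 = 0 \<and> P3 = 0 \<and> P4 = 0"
proof -
  have "P1\<^sup>2 + q2 * P3\<^sup>2 - q1 * (P2\<^sup>2 + q2 * P4\<^sup>2) = 0" "2 * (P1 * P3 - q1 * P2 * P4) = 0"
    using assms(6) quadratic_norm_eq_0_iff[OF assms(3,4)] by (simp_all add: biquadratic_norm_def)
  then have "P1\<^sup>2 + q2 * P3\<^sup>2 = q1 * (P2\<^sup>2 + q2 * P4\<^sup>2)" "P1 * P3 = q1 * P2 * P4" by simp_all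
  moreover have "q2 \<noteq> 0" using assms(3) by (auto simp: monic_quadratic_def)
  ultimately consider "P1\<^sup>2 = q1 * P2\<^sup>2" "P3\<^sup>2 = q1 * P4\<^sup>2"
    | "P1\<^sup>2 = q1 * q2 * P4\<^sup>2" "(q2 * P3)\<^sup>2 = q1 * q2 * P2\<^sup>2"
    using inner_norm_eq_0_cases by blast
  then show ?thesis
  proof cases
    case 1
    then show ?thesis using square_eq_monic_quadratic_mult_square[OF assms(1,2)] by blast
  next
    case 2
    then show ?thesis using square_eq_mult_monic_quadratics_mult_square[OF assms(1-5)] \<open>q2 \<noteq> 0\<close>
      by (metis mult_eq_0_iff)
  qed
qed


lemma sqrt_combination_degenerate:
  assumes "poly q x \<ge> 0" and "P2 + P3 = 0" and "P1 + q * P4 = 0"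
  shows "sqrt_combination q q P1 P2 P3 P4 x = 0"
proof -
  have "sqrt_combination q q P1 P2 P3 P4 x = poly (P1 + q * P4) x + poly (P2 + P3) x * sqrt (poly q x)"
    using assms(1) by (rule sqrt_combination_same_radicand)
  with assms(2,3) show ?thesis by simp
qed

lemma sqrt_combination_annihilating_poly:
  assumes "monic_quadratic q1" and "\<not> square_of_linear q1"
    and "monic_quadratic q2" and "\<not> square_of_linear q2"
    and "P1 \<noteq> 0 \<or> P2 \<noteq> 0 \<or> P3 \<noteq> 0 \<or> P4 \<noteq> 0"
    and "\<not> (q1 = q2 \<and> P2 + P3 = 0 \<and> P1 + q1 * P4 = 0)"
    and "degree P1 \<le> n" "degree P2 \<le> n" "degree P3 \<le> n" "degree P4 \<le> n"
  obtains M where "M \<noteq> 0" and "degree M \<le> 4 * (n + 2)"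
    and "\<And>x. poly q1 x \<ge> 0 \<Longrightarrow> poly q2 x \<ge> 0 \<Longrightarrow> sqrt_combination q1 q2 P1 P2 P3 P4 x = 0
            \<Longrightarrow> poly M x = 0"
proof (cases "q1 = q2")
  case True
  let ?M = "quadratic_norm q1 (P1 + q1 * P4) (P2 + P3)"
  have deg_q: "degree q1 \<le> 2" using assms(1) by (simp add: monic_quadratic_def)
  have "degree (P1 + q1 * P4) \<le> n + 2"
    using assms(7,10) deg_q degree_mult_le[of q1 P4] by (intro degree_add_le) auto
  then have "degree ?M \<le> 2 * (n + 2)"
    by (rule degree_quadratic_norm_le[OF deg_q _ degree_add_le[OF assms(8,9)]])
  moreover have "?M \<noteq> 0" using assms(6) True quadratic_norm_eq_0_iff[OF assms(1,2)] by auto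
  moreover have "poly ?M x = 0" if "poly q1 x \<ge> 0" "sqrt_combination q1 q2 P1 P2 P3 P4 x = 0" for x
    using that sqrt_combination_same_radicand[OF that(1)] True
    by (auto intro: poly_quadratic_norm_eq_0[of "sqrt (poly q1 x)"])
  ultimately show ?thesis using that[of ?M] by fastforce
next
  case False
  show ?thesis
  proof (rule that)
    show "biquadratic_norm q1 q2 P1 P2 P3 P4 \<noteq> 0"
      using biquadratic_norm_eq_0_imp_zero[OF assms(1-4) False] assms(5) by blast
    show "degree (biquadratic_norm q1 q2 P1 P2 P3 P4) \<le> 4 * (n + 2)"
      using assms(1,3,7-10) by (intro degree_biquadratic_norm_le) (simp_all add: monic_quadratic_def)
  qed (rule sqrt_combination_eq_0_imp_biquadratic_norm)
qed

lemma card_roots_le_degree: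
  fixes M :: "real poly"
  assumes "M \<noteq> 0" and "S \<subseteq> {x. poly M x = 0}"
  shows "finite S \<and> card S \<le> degree M"
  using assms poly_roots_finite[OF assms(1)] card_poly_roots_bound[OF assms(1)]
  by (meson card_mono finite_subset order_trans)

theorem theorem5p1:
  fixes q1 q2 P1 P2 P3 P4 :: "real poly" and I :: "real set"
  assumes "monic_quadratic q1" and "monic_quadratic q2"
    and "\<not> square_of_linear q1" and "\<not> square_of_linear q2"
    and "largest_infinite_interval q1 q2 I"
    and "P1 \<noteq> 0 \<or> P2 \<noteq> 0 \<or> P3 \<noteq> 0 \<or> P4 \<noteq> 0"
  defines "C \<equiv> Max {degree P1, degree P2, degree P3, degree P4}"
    and "P \<equiv> (\<lambda>x. poly P1 x + poly P2 x * sqrt (poly q1 x) + poly P3 x * sqrt (poly q2 x)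
                  + poly P4 x * sqrt (poly q1 x * poly q2 x))"
  shows "(\<not> (q1 = q2 \<and> P2 + P3 = 0 \<and> P1 + q1 * P4 = 0) \<longrightarrow>
            finite {x\<in>I. P x = 0} \<and> card {x\<in>I. P x = 0} \<le> 4 * (C + 2))
       \<and> ((q1 = q2 \<and> P2 + P3 = 0 \<and> P1 + q1 * P4 = 0) \<longrightarrow> (\<forall>x\<in>I. P x = 0))"
proof -
  have P: "P = sqrt_combination q1 q2 P1 P2 P3 P4" by (simp add: P_def sqrt_combination_def fun_eq_iff)
  have nonneg: "poly q1 x \<ge> 0" "poly q2 x \<ge> 0" if "x \<in> I" for x
    using assms(5) that by (auto simp: largest_infinite_interval_def)
  show ?thesis
  proof (rule conjI; intro impI)
    assume "\<not> (q1 = q2 \<and> P2 + P3 = 0 \<and> P1 + q1 * P4 = 0)"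
    moreover have "degree P1 \<le> C" "degree P2 \<le> C" "degree P3 \<le> C" "degree P4 \<le> C"
      unfolding C_def by (intro Max_ge; simp)+
    ultimately obtain M where "M \<noteq> 0" "degree M \<le> 4 * (C + 2)"
      and M: "\<And>x. poly q1 x \<ge> 0 \<Longrightarrow> poly q2 x \<ge> 0 \<Longrightarrow> P x = 0 \<Longrightarrow> poly M x = 0"
      unfolding P by (rule sqrt_combination_annihilating_poly[OF assms(1,3,2,4,6)]) blast
    have "{x\<in>I. P x = 0} \<subseteq> {x. poly M x = 0}" using M nonneg by blast
    with card_roots_le_degree[OF \<open>M \<noteq> 0\<close>] \<open>degree M \<le> _\<close>
    show "finite {x\<in>I. P x = 0} \<and> card {x\<in>I. P x = 0} \<le> 4 * (C + 2)" by (meson order_trans)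
  next
    assume "q1 = q2 \<and> P2 + P3 = 0 \<and> P1 + q1 * P4 = 0"
    then show "\<forall>x\<in>I. P x = 0" using nonneg(1) sqrt_combination_degenerate[of q1] by (auto simp: P)
  qed
qed

end
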